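(* Let $S\subseteq\mathbb Z$ be such that every translate $S+m$ ($m\in\mathbb Z$) is a set of recurrence. If $A\subseteq\mathbb Z$ has $d^*(A)>0$ and $n\in\mathbb Z$, then $S\cap(n+A-A)$ is infinite.
   Context: $S\subseteq\mathbb Z$ is a set of recurrence if for every measure preserving system $(X,\mu,T)$ (probability space, invertible measure preserving $T$) and every measurable $D$ with $\mu(D)>0$ there exists $k\in S$ with $\mu(D\cap T^kD)>0$. $A-A=\{a-b:a,b\in A\}$ and $d^*(A)=\lim_{N\to\infty}\sup_{M\in\mathbb Z}\frac{|A\cap[M,M+N-1]|}{N}$ is the upper Banach density. *)

theory Defs
  imports "HOL-Probability.Probability"
begin

definition inv_mps :: "'a measure \<Rightarrow> ('a \<Rightarrow> 'a) \<Rightarrow> bool" where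
  "inv_mps M T \<longleftrightarrow> prob_space M \<and> T \<in> M \<rightarrow>\<^sub>M M \<and> bij_betw T (space M) (space M)
     \<and> inv_into (space M) T \<in> M \<rightarrow>\<^sub>M M
     \<and> (\<forall>A\<in>sets M. emeasure M (T -` A \<inter> space M) = emeasure M A)"

definition ipow :: "'a measure \<Rightarrow> ('a \<Rightarrow> 'a) \<Rightarrow> int \<Rightarrow> 'a \<Rightarrow> 'a" where
  "ipow M T k = (if 0 \<le> k then T ^^ nat k else (inv_into (space M) T) ^^ nat (- k))"

text \<open>The set T^k D, written as the preimage of D under T^(-k).\<close>
definition itrans :: "'a measure \<Rightarrow> ('a \<Rightarrow> 'a) \<Rightarrow> int \<Rightarrow> 'a set \<Rightarrow> 'a set" where
  "itrans M T k D = ipow M T (- k) -` D \<inter> space M"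

definition recurrence_set :: "'a itself \<Rightarrow> int set \<Rightarrow> bool" where
  "recurrence_set _ S \<longleftrightarrow>
     (\<forall>(M::'a measure) T D. inv_mps M T \<longrightarrow> D \<in> sets M \<longrightarrow> measure M D > 0 \<longrightarrow>
        (\<exists>k\<in>S. measure M (D \<inter> itrans M T k D) > 0))"

definition upper_banach_density :: "int set \<Rightarrow> real" where
  "upper_banach_density A =
     lim (\<lambda>N::nat. SUP M::int. real (card (A \<inter> {M .. M + int N - 1})) / real N)"

end

theory Submission
  imports Defs "HOL-Library.Diagonal_Subsequence"
begin

text \<open>Suppose \<open>F = S \<inter> (n + A - A)\<close> were finite. Since \<open>A\<close> has positive upper Banach density,
  a pigeonhole argument on translates of \<open>A\<close> by multiples of some \<open>d > max \<bar>F - n\<bar>\<close> gives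
  \<open>c > max \<bar>F - n\<bar>\<close> and a set \<open>E \<subseteq> A \<inter> (A - c)\<close> of positive upper Banach density lying in a
  single residue class modulo some \<open>q > c + max \<bar>F - n\<bar>\<close>. Furstenberg's correspondence principle
  turns \<open>E\<close> into a measure preserving system in which the return times of a set of positive
  measure lie in \<open>E - E \<subseteq> q\<int>\<close>. Recurrence of \<open>S + (c - n)\<close> gives \<open>s \<in> S\<close> with
  \<open>s - n + c \<in> E - E\<close>. Then \<open>s \<in> F\<close>, so \<open>0 < s - n + c < q\<close>, contradicting
  \<open>q dvd s - n + c\<close>.\<close>

section \<open>Window counts and upper Banach density\<close>

definition window_count :: "int set \<Rightarrow> int \<Rightarrow> nat \<Rightarrow> nat" where
  "window_count A M N = card (A \<inter> {M..<M + int N})"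

definition dense_windows :: "int set \<Rightarrow> bool" where
  "dense_windows E \<longleftrightarrow>
     (\<exists>e>0. \<exists>\<^sub>F N in sequentially. \<exists>M. e * real N \<le> real (window_count E M N))"

lemma window_count_le: "window_count A M N \<le> N"
proof -
  have "window_count A M N \<le> card {M..<M + int N}"
    unfolding window_count_def by (intro card_mono) auto
  thus ?thesis by simp
qed

lemma window_count_add:
  "window_count A M (a + b) = window_count A M a + window_count A (M + int a) b"
proof -
  have "A \<inter> {M..<M + int (a + b)} = (A \<inter> {M..<M + int a}) \<union> (A \<inter> {M + int a..<M + int a + int b})"
    by auto
  moreover have "(A \<inter> {M..<M + int a}) \<inter> (A \<inter> {M + int a..<M + int a + int b}) = {}" by auto
  ultimately show ?thesis unfolding window_count_def by (simp add: card_Un_disjoint)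
qed

lemma window_count_mono: "a \<le> b \<Longrightarrow> window_count A M a \<le> window_count A M b"
  using window_count_add[of A M a "b - a"] by simp

lemma window_count_shift_le: "window_count A M N \<le> window_count A (M + int s) N + s"
proof -
  have "window_count A M N \<le> window_count A M (s + N)" by (rule window_count_mono) simp
  also have "\<dots> = window_count A M s + window_count A (M + int s) N" by (rule window_count_add)
  finally show ?thesis using window_count_le[of A M s] by linarith
qed

lemma card_window_translate:
  "card {t \<in> {M..<M + int N}. t + s \<in> B} = window_count B (M + s) N"
proof -
  have "B \<inter> {M + s..<M + s + int N} = (\<lambda>t. t + s) ` {t \<in> {M..<M + int N}. t + s \<in> B}"
    by (auto intro!: image_eqI[where x = "_ - s"])
  moreover have "inj (\<lambda>t::int. t + s)" by (simp add: inj_on_def)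
  ultimately show ?thesis
    unfolding window_count_def by (metis (no_types, lifting) card_image inj_on_subset subset_UNIV)
qed

lemma window_count_blocks_le:
  assumes "\<And>M'. real (window_count A M' K) \<le> C"
  shows "real (window_count A M (q * K)) \<le> q * C"
proof (induction q arbitrary: M)
  case 0 then show ?case by (simp add: window_count_def)
next
  case (Suc q)
  have "window_count A M (Suc q * K) = window_count A M K + window_count A (M + int K) (q * K)"
    using window_count_add[of A M K "q * K"] by simp
  then show ?case using assms[of M] Suc[of "M + int K"] by (simp add: algebra_simps)
qed

lemma window_count_cover_le:
  assumes "K > 0" "\<And>M'. real (window_count A M' K) \<le> C"
  shows "real (window_count A M N) \<le> real (N div K + 1) * C"
proof -
  let ?M' = "M + int ((N div K) * K)"
  have "window_count A M N = window_count A M ((N div K) * K) + window_count A ?M' (N mod K)"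
    using window_count_add[of A M "(N div K) * K" "N mod K"] by simp
  moreover have "window_count A ?M' (N mod K) \<le> window_count A ?M' K"
    using assms(1) by (intro window_count_mono) simp
  ultimately show ?thesis
    using window_count_blocks_le[of A K C M "N div K", OF assms(2)] assms(2)[of ?M']
    by (simp add: algebra_simps)
qed

definition max_window_density :: "int set \<Rightarrow> nat \<Rightarrow> real" where
  "max_window_density A N = (SUP M. real (window_count A M N) / real N)"

lemma bdd_above_window_density: "bdd_above (range (\<lambda>M. real (window_count A M N) / real N))"
proof (rule bdd_aboveI2[where M = 1])
  fix M
  show "real (window_count A M N) / real N \<le> 1"
    using window_count_le[of A M N] by (cases "N = 0") (auto simp: divide_le_eq_1)
qed

lemma window_density_le_max: "real (window_count A M N) / real N \<le> max_window_density A N"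
  unfolding max_window_density_def by (rule cSUP_upper[OF _ bdd_above_window_density]) simp

lemma max_window_density_nonneg: "0 \<le> max_window_density A N"
  using window_density_le_max[of A 0 N] by (smt (verit) divide_nonneg_nonneg of_nat_0_le_iff)

lemma max_window_density_le_1: "max_window_density A N \<le> 1"
  unfolding max_window_density_def
  by (rule cSUP_least) (use window_count_le in \<open>auto simp: divide_le_eq_1\<close>)

text \<open>A window of length \<open>N\<close> is covered by \<open>N div K + 1\<close> windows of length \<open>K\<close>.\<close>
lemma max_window_density_le:
  assumes "K > 0" "N > 0"
  shows "max_window_density A N \<le> max_window_density A K + real K / real N"
proof -
  have C: "real (window_count A M' K) \<le> real K * max_window_density A K" for M'
    using window_density_le_max[of A M' K] assms by (simp add: field_simps)
  have "real (window_count A M N) / real N \<le> max_window_density A K + real K / real N" for M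
  proof -
    have "real (window_count A M N) \<le> real (N div K + 1) * (real K * max_window_density A K)"
      using window_count_cover_le[OF assms(1) C] by simp
    also have "\<dots> = real ((N div K) * K) * max_window_density A K + real K * max_window_density A K"
      by (simp add: algebra_simps)
    also have "\<dots> \<le> real N * max_window_density A K + real K"
    proof -
      have "real ((N div K) * K) \<le> real N"
        by (simp only: of_nat_le_iff) (rule div_times_less_eq_dividend)
      hence "real ((N div K) * K) * max_window_density A K \<le> real N * max_window_density A K"
        using max_window_density_nonneg by (intro mult_right_mono) auto
      moreover have "real K * max_window_density A K \<le> real K"
        using max_window_density_le_1[of A K] by (simp add: mult_left_le)
      ultimately show ?thesis by linarith
    qed
    finally show ?thesis using assms by (simp add: field_simps)
  qed
  thus ?thesis unfolding max_window_density_def by (intro cSUP_least) auto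
qed

lemma max_window_density_tendsto_Inf:
  "max_window_density A \<longlonglongrightarrow> (INF K\<in>{1..}. max_window_density A K)"
proof (rule LIMSEQ_I)
  define L where "L = (INF K\<in>{1..}. max_window_density A K)"
  have bdd: "bdd_below (max_window_density A ` {1..})"
    by (rule bdd_belowI2[where m = 0]) (rule max_window_density_nonneg)
  fix r :: real assume r: "0 < r"
  hence "L < L + r/2" by simp
  then obtain K where K: "K \<in> {1..}" "max_window_density A K < L + r/2"
    unfolding L_def by (subst (asm) cINF_less_iff[OF _ bdd]) auto
  obtain N0 :: nat where N0: "N0 > 2 * real K / r" using reals_Archimedean2 by blast
  show "\<exists>no. \<forall>n\<ge>no. norm (max_window_density A n - L) < r"
  proof (intro exI allI impI)
    fix n assume n: "n \<ge> max 1 N0"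
    have "L \<le> max_window_density A n" unfolding L_def using n by (intro cINF_lower[OF bdd]) auto
    moreover have "real K / real n < r/2"
    proof -
      have "2 * real K / r < real n" using N0 n by linarith
      thus ?thesis using r n by (simp add: field_simps)
    qed
    moreover have "max_window_density A n \<le> max_window_density A K + real K / real n"
      using K n by (intro max_window_density_le) auto
    ultimately have "0 \<le> max_window_density A n - L" "max_window_density A n - L < r"
      using K(2) by linarith+
    thus "norm (max_window_density A n - L) < r" by simp
  qed
qed

lemma upper_banach_density_pos_imp_uniformly_dense:
  assumes "upper_banach_density A > 0"
  obtains e where "e > 0" "\<And>N. N > 0 \<Longrightarrow> \<exists>M. e * real N \<le> real (window_count A M N)"
proof -
  define L where "L = (INF K\<in>{1..}. max_window_density A K)"
  have bdd: "bdd_below (max_window_density A ` {1..})"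
    by (rule bdd_belowI2[where m = 0]) (rule max_window_density_nonneg)
  have "{M .. M + int N - 1} = {M..<M + int N}" for M :: int and N by auto
  hence "upper_banach_density A = lim (max_window_density A)"
    unfolding upper_banach_density_def max_window_density_def window_count_def by simp
  hence L: "L > 0"
    using assms limI[OF max_window_density_tendsto_Inf] unfolding L_def by simp
  show ?thesis
  proof (rule that[of "L/2"])
    fix N :: nat assume N: "N > 0"
    have "L \<le> max_window_density A N" unfolding L_def using N by (intro cINF_lower[OF bdd]) auto
    hence "L/2 < max_window_density A N" using L by simp
    then obtain M where "L/2 < real (window_count A M N) / real N"
      unfolding max_window_density_def
      by (subst (asm) less_cSUP_iff[OF _ bdd_above_window_density]) auto
    thus "\<exists>M. L/2 * real N \<le> real (window_count A M N)"
      using N by (auto simp: field_simps intro!: exI[of _ M])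
  qed (use L in simp)
qed

lemma card_UN_ge_bonferroni:
  fixes X :: "nat \<Rightarrow> 'a set"
  assumes "\<And>j. finite (X j)"
  shows "(\<Sum>j<L. real (card (X j))) - (\<Sum>j<L. \<Sum>i<j. real (card (X i \<inter> X j)))
           \<le> real (card (\<Union>j<L. X j))"
proof (induction L)
  case 0 then show ?case by simp
next
  case (Suc L)
  define U where "U = (\<Union>j<L. X j)"
  have "finite U" unfolding U_def using assms by auto
  hence "card (U \<union> X L) + card (U \<inter> X L) = card U + card (X L)"
    using card_Un_Int[OF _ assms[of L]] by simp
  moreover have "card (U \<inter> X L) \<le> (\<Sum>i<L. card (X i \<inter> X L))"
  proof -
    have "U \<inter> X L = (\<Union>i<L. X i \<inter> X L)" unfolding U_def by auto
    thus ?thesis using card_UN_le[of "{..<L}" "\<lambda>i. X i \<inter> X L"] by simp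
  qed
  ultimately have "real (card U) + real (card (X L)) - (\<Sum>i<L. real (card (X i \<inter> X L)))
                     \<le> real (card (U \<union> X L))"
    by (simp flip: of_nat_add of_nat_sum)
  moreover have "(\<Union>j<Suc L. X j) = U \<union> X L" unfolding U_def lessThan_Suc by auto
  ultimately show ?case using Suc.IH unfolding U_def by simp
qed

section \<open>A dense set avoiding prescribed differences\<close>

text \<open>If all pairwise intersections were small, by Bonferroni the union would not fit into \<open>W\<close>.\<close>
lemma large_pairwise_intersection:
  fixes X :: "nat \<Rightarrow> 'a set"
  assumes "finite W" "\<And>j. X j \<subseteq> W" "\<And>j. j < L \<Longrightarrow> a \<le> real (card (X j))"
    and "0 \<le> b" "real (card W) < real L * a - real L ^ 2 * b"
  shows "\<exists>j<L. \<exists>i<j. b \<le> real (card (X i \<inter> X j))"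
proof (rule ccontr)
  assume "\<not> ?thesis"
  hence small: "\<And>j i. j < L \<Longrightarrow> i < j \<Longrightarrow> real (card (X i \<inter> X j)) \<le> b" by force
  have fin: "finite (X j)" for j using assms(1,2) finite_subset by blast
  have "(\<Sum>j<L. \<Sum>i<j. real (card (X i \<inter> X j))) \<le> (\<Sum>j<L. \<Sum>i<L. b)"
  proof (intro sum_mono)
    fix j assume j: "j \<in> {..<L}"
    have "(\<Sum>i<j. real (card (X i \<inter> X j))) \<le> (\<Sum>i<j. b)" using small j by (intro sum_mono) auto
    also have "\<dots> \<le> (\<Sum>i<L. b)" using j assms(4) by (intro sum_mono2) auto
    finally show "(\<Sum>i<j. real (card (X i \<inter> X j))) \<le> (\<Sum>i<L. b)" .
  qed
  moreover have "real L * a \<le> (\<Sum>j<L. real (card (X j)))"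
    using sum_mono[of "{..<L}" "\<lambda>_. a" "\<lambda>j. real (card (X j))"] assms(3) by simp
  moreover have "card (\<Union>j<L. X j) \<le> card W" using assms(1,2) by (intro card_mono) auto
  ultimately show False
    using card_UN_ge_bonferroni[of X L, OF fin] assms(5) by (simp add: power2_eq_square)
qed

lemma window_count_residue_class:
  assumes "q > 0"
  obtains r where "r \<in> {0..<q}"
    "real (window_count B M N) \<le> real q * real (window_count {u \<in> B. u mod int q = int r} M N)"
proof -
  define W where "W = B \<inter> {M..<M + int N}"
  have "(\<lambda>x. nat (x mod int q)) ` W \<subseteq> {0..<q}" using assms by (auto simp: nat_less_iff)
  hence "(\<Sum>r\<in>{0..<q}. card {x \<in> W. nat (x mod int q) = r}) = card W"
    using sum.group[of W "{0..<q}" "\<lambda>x. nat (x mod int q)" "\<lambda>_. 1::nat"] unfolding W_def by simp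
  moreover have "{x \<in> W. nat (x mod int q) = r} = {u \<in> B. u mod int q = int r} \<inter> {M..<M + int N}"
    for r unfolding W_def using assms by auto
  ultimately have sum: "(\<Sum>r\<in>{0..<q}. real (window_count {u \<in> B. u mod int q = int r} M N))
                         = real (window_count B M N)"
    unfolding window_count_def W_def by (metis (no_types, lifting) of_nat_sum sum.cong)
  have "\<exists>r\<in>{0..<q}.
          real (window_count B M N) \<le> real q * real (window_count {u \<in> B. u mod int q = int r} M N)"
  proof (rule ccontr)
    assume "\<not> ?thesis"
    hence "(\<Sum>r\<in>{0..<q}. real q * real (window_count {u \<in> B. u mod int q = int r} M N))
             < (\<Sum>r\<in>{0..<q}. real (window_count B M N))"
      using assms by (intro sum_strict_mono) (auto simp: not_le)
    thus False by (simp add: sum flip: sum_distrib_left)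
  qed
  with that show ?thesis by blast
qed

text \<open>The sets \<open>(A - j d) \<inter> [M, M + N)\<close>, \<open>j < L\<close>, are nearly as dense as \<open>A \<inter> [M, M + N)\<close>
  because \<open>L d\<close> is small compared with \<open>N\<close>; two of them overlap on a dense set.\<close>
lemma dense_shifted_intersection:
  fixes L d N :: nat
  assumes dense: "e * real N \<le> real (window_count A M N)"
    and L: "2 \<le> real L * e" and N: "2 * L\<^sup>2 * d < N"
  shows "\<exists>\<delta>\<in>{1..<L}. \<exists>M'.
           real N / (4 * real L ^ 2) \<le> real (window_count {u \<in> A. u + int \<delta> * int d \<in> A} M' N)"
proof -
  have L0: "L > 0" using L by (cases L) auto
  define X where "X j = {t \<in> {M..<M + int N}. t + int j * int d \<in> A}" for j :: nat
  have "\<exists>j<L. \<exists>i<j. real N / (4 * real L ^ 2) \<le> real (card (X i \<inter> X j))"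
  proof (rule large_pairwise_intersection[where a = "e * real N - real L * real d"])
    fix j assume j: "j < L"
    have "card (X j) = window_count A (M + int (j * d)) N"
      unfolding X_def using card_window_translate[of M N "int j * int d" A] by simp
    moreover have "real (window_count A M N) \<le> real (window_count A (M + int (j * d)) N) + real j * real d"
      using window_count_shift_le[of A M N "j * d"] by (simp flip: of_nat_mult of_nat_add)
    moreover have "real j * real d \<le> real L * real d" using j by (intro mult_right_mono) auto
    ultimately show "e * real N - real L * real d \<le> real (card (X j))" using dense by linarith
  next
    have "real (2 * L\<^sup>2 * d) \<le> real N" using N by (simp only: of_nat_le_iff)
    hence "2 * real L ^ 2 * real d \<le> real N" by simp
    moreover have "2 * real N \<le> real L * e * real N" using L by (intro mult_right_mono) auto
    moreover have "real L * (e * real N - real L * real d) = real L * e * real N - real L ^ 2 * real d"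
      by (simp add: power2_eq_square algebra_simps)
    moreover have "real L ^ 2 * (real N / (4 * real L ^ 2)) = real N / 4" using L0 by (simp add: field_simps)
    moreover have "real (card {M..<M + int N}) = real N" "0 < real N" using N by simp_all
    ultimately show "real (card {M..<M + int N})
       < real L * (e * real N - real L * real d) - real L ^ 2 * (real N / (4 * real L ^ 2))"
      by linarith
  qed (auto simp: X_def)
  then obtain i j where ij: "j < L" "i < j" "real N / (4 * real L ^ 2) \<le> real (card (X i \<inter> X j))"
    by blast
  define B where "B = {u \<in> A. u + int (j - i) * int d \<in> A}"
  have "X i \<inter> X j = {t \<in> {M..<M + int N}. t + int i * int d \<in> B}"
    unfolding X_def B_def using ij by (auto simp: algebra_simps of_nat_diff)
  hence "real N / (4 * real L ^ 2) \<le> real (window_count B (M + int i * int d) N)"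
    using card_window_translate[of M N "int i * int d" B] ij(3) by simp
  thus ?thesis unfolding B_def using ij by (intro bexI[of _ "j - i"]) auto
qed

text \<open>The set \<open>E\<close> lies in one residue class modulo \<open>q\<close>, while \<open>0 < g + c < q\<close> for all \<open>g \<in> G\<close>.\<close>
lemma dense_set_avoiding_differences:
  assumes e: "e > 0" and dense: "\<And>N. N > 0 \<Longrightarrow> \<exists>M. e * real N \<le> real (window_count A M N)"
    and G: "finite G"
  obtains E c where "E \<subseteq> {u \<in> A. u + c \<in> A}" "dense_windows E"
    "\<forall>u\<in>E. \<forall>v\<in>E. \<forall>g\<in>G. u - v \<noteq> g + c"
proof -
  define d :: nat where "d = nat (Max (insert 0 (abs ` G))) + 1"
  have d: "\<bar>g\<bar> < int d" if "g \<in> G" for g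
  proof -
    have "\<bar>g\<bar> \<le> Max (insert 0 (abs ` G))" "0 \<le> Max (insert 0 (abs ` G))"
      using G that by (auto intro: Max_ge)
    thus ?thesis unfolding d_def by linarith
  qed
  define L :: nat where "L = nat \<lceil>2/e\<rceil> + 1"
  have L: "2 \<le> real L * e"
  proof -
    have "2/e \<le> real L" unfolding L_def by linarith
    thus ?thesis using e by (simp add: field_simps)
  qed
  define q :: nat where "q = (L + 1) * d"
  have q: "q > 0" unfolding q_def d_def by simp
  define E where "E \<delta> r = {u \<in> A. u + int \<delta> * int d \<in> A \<and> u mod int q = int r}" for \<delta> r :: nat
  have "\<forall>\<^sub>F N in sequentially. \<exists>p\<in>{1..<L} \<times> {0..<q}. \<exists>M.
          real N / (4 * real L ^ 2 * real q) \<le> real (window_count (E (fst p) (snd p)) M N)"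
    unfolding eventually_sequentially
  proof (intro exI allI impI)
    fix N assume N: "N \<ge> 2 * L\<^sup>2 * d + 1"
    have N': "2 * L\<^sup>2 * d < N" using N by simp
    obtain M where "e * real N \<le> real (window_count A M N)" using dense[of N] N' by auto
    from dense_shifted_intersection[OF this L N'] obtain \<delta> M' where \<delta>: "\<delta> \<in> {1..<L}"
      "real N / (4 * real L ^ 2) \<le> real (window_count {u \<in> A. u + int \<delta> * int d \<in> A} M' N)"
      by blast
    let ?B = "{u \<in> A. u + int \<delta> * int d \<in> A}"
    obtain r where r: "r \<in> {0..<q}"
      "real (window_count ?B M' N) \<le> real q * real (window_count {u \<in> ?B. u mod int q = int r} M' N)"
      using window_count_residue_class[OF q] by blast
    moreover have "{u \<in> ?B. u mod int q = int r} = E \<delta> r" unfolding E_def by auto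
    ultimately have r: "r \<in> {0..<q}" "real (window_count ?B M' N) \<le> real q * real (window_count (E \<delta> r) M' N)"
      by simp_all
    have "real N / (4 * real L ^ 2) \<le> real q * real (window_count (E \<delta> r) M' N)"
      using \<delta>(2) r(2) by linarith
    hence "real N / (4 * real L ^ 2) / real q \<le> real (window_count (E \<delta> r) M' N)"
      using q by (subst pos_divide_le_eq) (simp_all add: mult.commute)
    with \<delta>(1) r(1) show "\<exists>p\<in>{1..<L} \<times> {0..<q}. \<exists>M.
        real N / (4 * real L ^ 2 * real q) \<le> real (window_count (E (fst p) (snd p)) M N)"
      by (intro bexI[of _ "(\<delta>, r)"] exI[of _ M']) (auto simp: divide_divide_eq_left)
  qed
  hence "\<exists>\<^sub>F N in sequentially. \<exists>p\<in>{1..<L} \<times> {0..<q}. \<exists>M.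
          real N / (4 * real L ^ 2 * real q) \<le> real (window_count (E (fst p) (snd p)) M N)"
    by (rule eventually_frequently[rotated]) simp
  hence "\<exists>p\<in>{1..<L} \<times> {0..<q}. \<exists>\<^sub>F N in sequentially. \<exists>M.
          real N / (4 * real L ^ 2 * real q) \<le> real (window_count (E (fst p) (snd p)) M N)"
    by (rule frequently_bex_finite[rotated]) simp
  then obtain \<delta> r where \<delta>r: "\<delta> \<in> {1..<L}" and freq: "\<exists>\<^sub>F N in sequentially. \<exists>M.
      real N / (4 * real L ^ 2 * real q) \<le> real (window_count (E \<delta> r) M N)"
    by (auto simp: Bex_def)
  show ?thesis
  proof (rule that[of "E \<delta> r" "int \<delta> * int d"])
    show "E \<delta> r \<subseteq> {u \<in> A. u + int \<delta> * int d \<in> A}" unfolding E_def by auto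
    have "1 / (4 * real L ^ 2 * real q) > 0" using q \<delta>r by simp
    moreover from freq have "\<exists>\<^sub>F N in sequentially. \<exists>M.
      1 / (4 * real L ^ 2 * real q) * real N \<le> real (window_count (E \<delta> r) M N)"
      by simp
    ultimately show "dense_windows (E \<delta> r)" unfolding dense_windows_def by blast
  next
    show "\<forall>u\<in>E \<delta> r. \<forall>v\<in>E \<delta> r. \<forall>g\<in>G. u - v \<noteq> g + int \<delta> * int d"
    proof (intro ballI)
      fix u v g assume uvg: "u \<in> E \<delta> r" "v \<in> E \<delta> r" "g \<in> G"
      have "int q dvd u - v" using uvg(1,2) unfolding E_def by (auto intro: mod_eq_dvd_iff[THEN iffD1])
      moreover have "0 < g + int \<delta> * int d" "g + int \<delta> * int d < int q"
      proof -
        have "int d \<le> int \<delta> * int d" "int \<delta> * int d \<le> int L * int d"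
          using \<delta>r mult_right_mono[of 1 "int \<delta>" "int d"] mult_right_mono[of "int \<delta>" "int L" "int d"]
          by auto
        thus "0 < g + int \<delta> * int d" "g + int \<delta> * int d < int q"
          using d[OF uvg(3)] unfolding q_def by (auto simp: algebra_simps)
      qed
      ultimately show "u - v \<noteq> g + int \<delta> * int d" using zdvd_not_zless by auto
    qed
  qed
qed

section \<open>Furstenberg's correspondence principle\<close>

lemma sum_int_interval_shift:
  fixes f :: "int \<Rightarrow> 'a::ab_group_add"
  shows "(\<Sum>t\<in>{a..<a + int N}. f (t + 1)) = (\<Sum>t\<in>{a..<a + int N}. f t) + f (a + int N) - f a"
proof (induction N)
  case 0 then show ?case by simp
next
  case (Suc N)
  have "{a..<a + int (Suc N)} = insert (a + int N) {a..<a + int N}" by auto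
  with Suc show ?case by (simp add: algebra_simps)
qed

text \<open>Patterns take values in \<open>real\<close> rather than \<open>bool\<close> so that the Kolmogorov extension theorem
  for Polish spaces (\<open>polish_projective\<close>) applies to their limit frequencies.\<close>
locale window_frequencies =
  fixes E :: "int set" and start :: "nat \<Rightarrow> int" and len :: "nat \<Rightarrow> nat"
  assumes len_gt: "\<And>k. k < len k"
begin

definition pattern :: "int set \<Rightarrow> int \<Rightarrow> int \<Rightarrow> real" where
  "pattern J t = restrict (\<lambda>i. indicator E (t + i)) J"

definition patterns :: "int set \<Rightarrow> (int \<Rightarrow> real) set" where
  "patterns J = PiE J (\<lambda>_. {0, 1})"

definition window :: "nat \<Rightarrow> int set" where
  "window k = {start k..<start k + int (len k)}"

definition freq :: "nat \<Rightarrow> int set \<Rightarrow> (int \<Rightarrow> real) \<Rightarrow> real" where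
  "freq k J x = (\<Sum>t\<in>window k. if pattern J t = x then 1 else 0) / real (len k)"

lemma pattern_in_patterns: "pattern J t \<in> patterns J"
  unfolding pattern_def patterns_def by (auto simp: indicator_def)

lemma finite_patterns: "finite J \<Longrightarrow> finite (patterns J)"
  unfolding patterns_def by (intro finite_PiE) auto

lemma patterns_empty: "patterns {} = {\<lambda>_. undefined}"
  unfolding patterns_def by simp

lemma len_pos: "real (len k) > 0"
  using len_gt[of k] by simp

lemma freq_nonneg: "0 \<le> freq k J x"
  unfolding freq_def by (intro divide_nonneg_nonneg sum_nonneg) auto

lemma freq_le_1: "freq k J x \<le> 1"
proof -
  have "(\<Sum>t\<in>window k. if pattern J t = x then 1 else 0) \<le> (\<Sum>t\<in>window k. 1::real)"
    by (intro sum_mono) auto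
  thus ?thesis unfolding freq_def window_def using len_pos[of k] by (simp add: divide_le_eq_1)
qed

text \<open>Diagonal argument: there are only countably many finite patterns, and all frequencies lie
  in \<open>[0, 1]\<close>.\<close>
lemma convergent_freq_subseq:
  "\<exists>\<sigma>. strict_mono \<sigma> \<and> (\<forall>(J, x)\<in>(SIGMA J:{J. finite J}. patterns J). convergent (\<lambda>i. freq (\<sigma> i) J x))"
proof -
  let ?P = "SIGMA J:{J. finite J}. patterns J"
  have "countable ?P" using finite_patterns by (intro countable_SIGMA countable_Collect_finite) (auto intro: countable_finite)
  define p where "p = from_nat_into ?P"
  interpret subseqs "\<lambda>n s. convergent (\<lambda>i. freq (s i) (fst (p n)) (snd (p n)))"
  proof
    fix n and s :: "nat \<Rightarrow> nat"
    have "\<bar>freq (s i) (fst (p n)) (snd (p n))\<bar> \<le> 1" for i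
      using freq_nonneg freq_le_1 by (simp add: abs_le_iff)
    hence "bounded (range (\<lambda>i. freq (s i) (fst (p n)) (snd (p n))))" by (intro boundedI[where B = 1]) auto
    then obtain l r where "strict_mono r" "((\<lambda>i. freq (s i) (fst (p n)) (snd (p n))) \<circ> r) \<longlonglongrightarrow> l"
      using bounded_imp_convergent_subsequence by blast
    thus "\<exists>r. strict_mono r \<and> convergent (\<lambda>i. freq ((s \<circ> r) i) (fst (p n)) (snd (p n)))"
      by (auto simp: convergent_def o_def)
  qed
  show ?thesis
  proof (intro exI conjI ballI)
    show "strict_mono diagseq" by (rule subseq_diagseq)
    fix Jx assume "Jx \<in> ?P"
    then obtain n where n: "p n = Jx" unfolding p_def using from_nat_into_surj[OF \<open>countable ?P\<close>] by blast
    have "convergent (\<lambda>i. freq ((diagseq \<circ> (+) (Suc n)) i) (fst (p n)) (snd (p n)))"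
      by (rule diagseq_holds) (auto dest: convergent_subseq_convergent simp: o_def)
    hence "convergent (\<lambda>i. freq (diagseq (i + Suc n)) (fst Jx) (snd Jx))" by (simp add: o_def add.commute n)
    hence "convergent (\<lambda>i. freq (diagseq i) (fst Jx) (snd Jx))"
      using convergent_ignore_initial_segment[of "\<lambda>i. freq (diagseq i) (fst Jx) (snd Jx)" "Suc n"] by blast
    thus "case Jx of (J, x) \<Rightarrow> convergent (\<lambda>i. freq (diagseq i) J x)" by (simp add: case_prod_beta)
  qed
qed

definition freq_subseq :: "nat \<Rightarrow> nat" where
  "freq_subseq = (SOME \<sigma>. strict_mono \<sigma> \<and>
     (\<forall>(J, x)\<in>(SIGMA J:{J. finite J}. patterns J). convergent (\<lambda>i. freq (\<sigma> i) J x)))"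

definition limit_freq :: "int set \<Rightarrow> (int \<Rightarrow> real) \<Rightarrow> real" where
  "limit_freq J x = lim (\<lambda>i. freq (freq_subseq i) J x)"

lemma strict_mono_freq_subseq: "strict_mono freq_subseq"
  using someI_ex[OF convergent_freq_subseq] unfolding freq_subseq_def by blast

lemma limit_freq:
  assumes "finite J" "x \<in> patterns J"
  shows "(\<lambda>i. freq (freq_subseq i) J x) \<longlonglongrightarrow> limit_freq J x"
proof -
  have "convergent (\<lambda>i. freq (freq_subseq i) J x)"
    using someI_ex[OF convergent_freq_subseq] assms unfolding freq_subseq_def by fast
  thus ?thesis unfolding limit_freq_def by (simp add: convergent_LIMSEQ_iff)
qed

lemma limit_freq_nonneg: "finite J \<Longrightarrow> x \<in> patterns J \<Longrightarrow> 0 \<le> limit_freq J x"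
  by (rule LIMSEQ_le_const[OF limit_freq]) (auto intro: freq_nonneg)

lemma freq_restrict_sum:
  assumes "J \<subseteq> H" "finite H"
  shows "freq k J x = (\<Sum>y\<in>{y \<in> patterns H. restrict y J = x}. freq k H y)"
proof -
  define Y where "Y = {y \<in> patterns H. restrict y J = x}"
  have "finite Y" unfolding Y_def using finite_patterns[OF assms(2)] by simp
  have inner: "(\<Sum>y\<in>Y. if pattern H t = y then 1 else 0) = (if pattern J t = x then 1 else (0::real))" for t
  proof -
    have "pattern H t \<in> Y \<longleftrightarrow> pattern J t = x"
      unfolding Y_def using pattern_in_patterns[of H t] assms(1)
      by (auto simp: pattern_def restrict_def fun_eq_iff)
    thus ?thesis using \<open>finite Y\<close> by (simp add: sum.delta)
  qed
  have "(\<Sum>y\<in>Y. freq k H y) = (\<Sum>t\<in>window k. \<Sum>y\<in>Y. if pattern H t = y then 1 else 0) / real (len k)"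
    unfolding freq_def by (simp add: sum_divide_distrib sum.swap[of _ Y])
  also have "\<dots> = freq k J x" unfolding freq_def inner by simp
  finally show ?thesis unfolding Y_def by simp
qed

lemma limit_freq_restrict_sum:
  assumes "J \<subseteq> H" "finite H" "x \<in> patterns J"
  shows "limit_freq J x = (\<Sum>y\<in>{y \<in> patterns H. restrict y J = x}. limit_freq H y)"
proof -
  have "(\<lambda>i. freq (freq_subseq i) J x) \<longlonglongrightarrow> (\<Sum>y\<in>{y \<in> patterns H. restrict y J = x}. limit_freq H y)"
    unfolding freq_restrict_sum[OF assms(1,2)] by (intro tendsto_sum limit_freq assms) auto
  moreover have "finite J" using assms(1,2) finite_subset by auto
  ultimately show ?thesis using limit_freq[OF _ assms(3)] LIMSEQ_unique by blast
qed

lemma sum_limit_freq: "finite H \<Longrightarrow> (\<Sum>y\<in>patterns H. limit_freq H y) = 1"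
proof -
  assume H: "finite H"
  have "freq k {} (\<lambda>_. undefined) = 1" for k
    using len_pos[of k] unfolding freq_def pattern_def window_def by (simp add: restrict_def)
  moreover have "(\<lambda>i. freq (freq_subseq i) {} (\<lambda>_. undefined)) \<longlonglongrightarrow> limit_freq {} (\<lambda>_. undefined)"
    by (intro limit_freq) (auto simp: patterns_empty)
  ultimately have "limit_freq {} (\<lambda>_. undefined) = 1" by (simp add: LIMSEQ_const_iff)
  thus ?thesis
    using limit_freq_restrict_sum[of "{}" H "\<lambda>_. undefined"] H patterns_empty by (simp add: restrict_def)
qed

definition translate_pattern :: "int set \<Rightarrow> (int \<Rightarrow> real) \<Rightarrow> int \<Rightarrow> real" where
  "translate_pattern K x = restrict (\<lambda>j. x (j - 1)) ((\<lambda>i. i + 1) ` K)"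

lemma pattern_eq_translate_pattern_iff:
  assumes "x \<in> patterns K"
  shows "pattern ((\<lambda>i. i + 1) ` K) t = translate_pattern K x \<longleftrightarrow> pattern K (t + 1) = x"
proof
  assume h: "pattern ((\<lambda>i. i + 1) ` K) t = translate_pattern K x"
  show "pattern K (t + 1) = x"
  proof
    fix i
    show "pattern K (t + 1) i = x i"
    proof (cases "i \<in> K")
      case True
      thus ?thesis using fun_cong[OF h, of "i + 1"]
        unfolding pattern_def translate_pattern_def by (simp add: algebra_simps)
    next
      case False
      thus ?thesis using assms unfolding pattern_def patterns_def by (auto simp: PiE_def extensional_def)
    qed
  qed
next
  assume h: "pattern K (t + 1) = x"
  show "pattern ((\<lambda>i. i + 1) ` K) t = translate_pattern K x"
  proof
    fix j
    show "pattern ((\<lambda>i. i + 1) ` K) t j = translate_pattern K x j"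
    proof (cases "j - 1 \<in> K")
      case True
      hence "j \<in> (\<lambda>i. i + 1) ` K" by force
      thus ?thesis using True fun_cong[OF h, of "j - 1"]
        unfolding pattern_def translate_pattern_def by (simp add: algebra_simps)
    next
      case False
      hence "j \<notin> (\<lambda>i. i + 1) ` K" by auto
      thus ?thesis unfolding pattern_def translate_pattern_def by simp
    qed
  qed
qed

text \<open>Frequencies of a pattern and of its translate differ by boundary terms only.\<close>
lemma freq_translate_pattern:
  assumes "x \<in> patterns K"
  shows "\<bar>freq k ((\<lambda>i. i + 1) ` K) (translate_pattern K x) - freq k K x\<bar> \<le> 1 / real (len k)"
proof -
  define f where "f t = (if pattern K t = x then 1 else (0::real))" for t
  have "freq k ((\<lambda>i. i + 1) ` K) (translate_pattern K x) - freq k K x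
        = ((\<Sum>t\<in>window k. f (t + 1)) - (\<Sum>t\<in>window k. f t)) / real (len k)"
    unfolding freq_def f_def pattern_eq_translate_pattern_iff[OF assms] by (simp add: diff_divide_distrib)
  also have "\<dots> = (f (start k + int (len k)) - f (start k)) / real (len k)"
    unfolding window_def sum_int_interval_shift by simp
  finally show ?thesis using len_pos[of k] by (simp add: f_def abs_divide divide_right_mono)
qed

lemma limit_freq_translate_pattern:
  assumes "finite K" "x \<in> patterns K"
  shows "limit_freq ((\<lambda>i. i + 1) ` K) (translate_pattern K x) = limit_freq K x"
proof -
  let ?sK = "(\<lambda>i. i + 1) ` K"
  have "translate_pattern K x \<in> patterns ?sK"
    using assms(2) unfolding translate_pattern_def patterns_def by (auto simp: PiE_def Pi_def)
  hence lim: "(\<lambda>i. freq (freq_subseq i) ?sK (translate_pattern K x) - freq (freq_subseq i) K x)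
               \<longlonglongrightarrow> limit_freq ?sK (translate_pattern K x) - limit_freq K x"
    using assms by (intro tendsto_diff limit_freq) auto
  have "(\<lambda>i. freq (freq_subseq i) ?sK (translate_pattern K x) - freq (freq_subseq i) K x) \<longlonglongrightarrow> 0"
  proof (rule Lim_null_comparison[OF always_eventually LIMSEQ_inverse_real_of_nat], rule allI)
    fix i
    have "Suc i \<le> len (freq_subseq i)"
      using seq_suble[OF strict_mono_freq_subseq, of i] len_gt[of "freq_subseq i"] by simp
    hence "1 / real (len (freq_subseq i)) \<le> inverse (real (Suc i))"
      by (simp add: divide_inverse le_imp_inverse_le del: of_nat_Suc)
    thus "norm (freq (freq_subseq i) ?sK (translate_pattern K x) - freq (freq_subseq i) K x)
          \<le> inverse (real (Suc i))"
      using freq_translate_pattern[OF assms(2), of "freq_subseq i"] by simp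
  qed
  with lim show ?thesis using LIMSEQ_unique by fastforce
qed

lemma limit_freq_pos_imp_occurs:
  assumes "limit_freq J x > 0" "finite J" "x \<in> patterns J"
  obtains t where "pattern J t = x"
proof -
  have "(\<lambda>i. freq (freq_subseq i) J x) \<longlonglongrightarrow> 0" if "\<And>t. pattern J t \<noteq> x"
    using that unfolding freq_def by simp
  thus ?thesis using that limit_freq[OF assms(2,3)] LIMSEQ_unique assms(1) by force
qed

lemma limit_freq_singleton_ge:
  assumes "\<And>k. e * real (len k) \<le> real (card (E \<inter> window k))"
  shows "e \<le> limit_freq {0} (restrict (\<lambda>_. 1) {0})"
proof -
  have "pattern {0} t = restrict (\<lambda>_. 1) {0} \<longleftrightarrow> t \<in> E" for t
    unfolding pattern_def by (auto simp: fun_eq_iff restrict_def indicator_def)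
  hence "freq k {0} (restrict (\<lambda>_. 1) {0}) = real (card (E \<inter> window k)) / real (len k)" for k
    using sum_of_bool_eq[of "window k" "\<lambda>t. t \<in> E", where 'a = real]
    unfolding freq_def by (simp add: window_def of_bool_def Int_commute)
  hence "e \<le> freq k {0} (restrict (\<lambda>_. 1) {0})" for k
    using assms[of k] len_pos[of k] by (simp add: le_divide_eq)
  thus ?thesis by (intro LIMSEQ_le_const[OF limit_freq]) (auto simp: patterns_def)
qed

text \<open>The limit frequencies form a projective family of distributions on the products \<open>\<real>\<^sup>J\<close>.\<close>
definition marginal :: "int set \<Rightarrow> (int \<Rightarrow> real) measure" where
  "marginal J = distr (point_measure (patterns J) (\<lambda>x. ennreal (limit_freq J x)))
                      (PiM J (\<lambda>_. borel)) (\<lambda>x. x)"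

lemma patterns_subset_space: "patterns J \<subseteq> space (PiM J (\<lambda>_. borel :: real measure))"
  unfolding patterns_def space_PiM by auto

lemma sets_marginal [simp]: "sets (marginal J) = sets (PiM J (\<lambda>_. borel))"
  unfolding marginal_def by simp

lemma space_marginal [simp]: "space (marginal J) = space (PiM J (\<lambda>_. borel))"
  unfolding marginal_def by simp

lemma emeasure_marginal:
  assumes "finite J" "X \<in> sets (PiM J (\<lambda>_. borel))"
  shows "emeasure (marginal J) X = ennreal (\<Sum>x\<in>patterns J \<inter> X. limit_freq J x)"
proof -
  have "(\<lambda>x. x) \<in> point_measure (patterns J) f \<rightarrow>\<^sub>M PiM J (\<lambda>_. borel)" for f
    unfolding measurable_point_measure_eq1 using patterns_subset_space by auto
  hence "emeasure (marginal J) X = emeasure (point_measure (patterns J) (\<lambda>x. ennreal (limit_freq J x))) (X \<inter> patterns J)"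
    unfolding marginal_def using assms(2) by (subst emeasure_distr) (auto simp: space_point_measure)
  also have "\<dots> = (\<Sum>x\<in>X \<inter> patterns J. ennreal (limit_freq J x))"
    using finite_patterns[OF assms(1)] by (intro emeasure_point_measure_finite) auto
  also have "\<dots> = ennreal (\<Sum>x\<in>X \<inter> patterns J. limit_freq J x)"
    using limit_freq_nonneg[OF assms(1)] by (intro sum_ennreal) auto
  finally show ?thesis by (simp add: Int_commute)
qed

lemma prob_space_marginal: "finite J \<Longrightarrow> prob_space (marginal J)"
proof (rule prob_spaceI)
  assume J: "finite J"
  have "patterns J \<inter> space (PiM J (\<lambda>_. borel)) = patterns J" using patterns_subset_space by auto
  thus "emeasure (marginal J) (space (marginal J)) = 1"
    using emeasure_marginal[OF J, of "space (PiM J (\<lambda>_. borel))"] sum_limit_freq[OF J] by simp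
qed

lemma marginal_restrict:
  assumes JH: "J \<subseteq> H" and H: "finite H"
  shows "marginal J = distr (marginal H) (PiM J (\<lambda>_. borel)) (\<lambda>f. restrict f J)"
proof (rule measure_eqI)
  have J: "finite J" using JH H finite_subset by auto
  have rm: "(\<lambda>f. restrict f J) \<in> marginal H \<rightarrow>\<^sub>M PiM J (\<lambda>_. borel)"
    by (subst measurable_cong_sets[OF sets_marginal refl]) (rule measurable_restrict_subset[OF JH])
  show "sets (marginal J) = sets (distr (marginal H) (PiM J (\<lambda>_. borel)) (\<lambda>f. restrict f J))" by simp
  fix X assume "X \<in> sets (marginal J)"
  hence X: "X \<in> sets (PiM J (\<lambda>_. borel))" by simp
  have restrict_in: "restrict y J \<in> patterns J" if "y \<in> patterns H" for y
    using that JH unfolding patterns_def by (auto simp: PiE_def Pi_def)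
  have "patterns H \<subseteq> space (marginal H)" using patterns_subset_space[of H] by simp
  hence "patterns H \<inter> ((\<lambda>f. restrict f J) -` X \<inter> space (marginal H)) = {y \<in> patterns H. restrict y J \<in> X}"
    by blast
  moreover have "(\<Sum>y\<in>{y \<in> patterns H. restrict y J \<in> X}. limit_freq H y)
      = (\<Sum>x\<in>patterns J \<inter> X. \<Sum>y\<in>{y \<in> {y \<in> patterns H. restrict y J \<in> X}. restrict y J = x}. limit_freq H y)"
    using finite_patterns[OF H] finite_patterns[OF J] restrict_in by (intro sum.group[symmetric]) auto
  moreover have "{y \<in> {y \<in> patterns H. restrict y J \<in> X}. restrict y J = x} = {y \<in> patterns H. restrict y J = x}"
    if "x \<in> X" for x using that by blast
  moreover have "(\<Sum>y\<in>{y \<in> patterns H. restrict y J = x}. limit_freq H y) = limit_freq J x"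
    if "x \<in> patterns J" for x using limit_freq_restrict_sum[OF JH H that] by simp
  moreover have "(\<lambda>f. restrict f J) -` X \<inter> space (marginal H) \<in> sets (PiM H (\<lambda>_. borel))"
    using measurable_sets[OF rm X] by simp
  ultimately show "emeasure (marginal J) X = emeasure (distr (marginal H) (PiM J (\<lambda>_. borel)) (\<lambda>f. restrict f J)) X"
    by (simp add: emeasure_distr[OF rm X] emeasure_marginal[OF H] emeasure_marginal[OF J X])
qed

lemma polish_projective_marginal: "polish_projective UNIV marginal"
  unfolding polish_projective_def
  by (rule projective_family.intro) (auto intro: marginal_restrict prob_space_marginal)

end

sublocale window_frequencies \<subseteq> P: polish_projective UNIV marginal
  by (rule polish_projective_marginal)

definition bool_seqs :: "(int \<Rightarrow> bool) measure" where
  "bool_seqs = PiM UNIV (\<lambda>_. count_space UNIV)"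

definition shift :: "(int \<Rightarrow> bool) \<Rightarrow> int \<Rightarrow> bool" where
  "shift x = (\<lambda>i. x (i + 1))"

lemma space_bool_seqs [simp]: "space bool_seqs = UNIV"
  unfolding bool_seqs_def by (simp add: space_PiM)

lemma shift_measurable: "shift \<in> bool_seqs \<rightarrow>\<^sub>M bool_seqs"
  unfolding bool_seqs_def shift_def
  by (rule measurable_PiM_single') (auto simp: space_PiM intro: measurable_component_singleton)

lemma bij_shift: "bij shift"
  by (rule bij_betwI[where g = "\<lambda>x i. x (i - 1)"]) (auto simp: shift_def)

lemma inv_into_shift: "inv_into UNIV shift = (\<lambda>x i. x (i - 1))"
proof
  fix y :: "int \<Rightarrow> bool"
  show "inv_into UNIV shift y = (\<lambda>i. y (i - 1))"
    by (intro inv_into_f_eq bij_is_inj[OF bij_shift]) (auto simp: shift_def)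
qed

lemma inv_shift_measurable: "(\<lambda>x i. x (i - 1)) \<in> bool_seqs \<rightarrow>\<^sub>M bool_seqs"
  unfolding bool_seqs_def
  by (rule measurable_PiM_single') (auto simp: space_PiM intro: measurable_component_singleton)

lemma ipow_shift:
  assumes "space M = UNIV"
  shows "ipow M shift j x = (\<lambda>i. x (i + j))"
proof -
  have "(shift ^^ n) x = (\<lambda>i. x (i + int n))" for n x
    by (induction n arbitrary: x) (auto simp: shift_def algebra_simps)
  moreover have "((\<lambda>x i. x (i - 1)) ^^ n) x = (\<lambda>i. x (i - int n))" for n and x :: "int \<Rightarrow> bool"
    by (induction n arbitrary: x) (auto simp: algebra_simps)
  ultimately show ?thesis unfolding ipow_def assms inv_into_shift by auto
qed

lemma sets_bool_seqs_all:
  assumes "finite J"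
  shows "{x. \<forall>i\<in>J. x i} \<in> sets bool_seqs"
proof -
  have "{x. \<forall>i\<in>J. x i} = prod_emb UNIV (\<lambda>_. count_space UNIV) J (PiE J (\<lambda>_. {True}))"
    by (auto simp: prod_emb_def space_PiM PiE_iff fun_eq_iff restrict_def)
  thus ?thesis unfolding bool_seqs_def by (simp only:) (intro sets_PiM_I assms; simp)
qed

definition ones :: "(int \<Rightarrow> real) \<Rightarrow> int \<Rightarrow> bool" where
  "ones \<omega> i \<longleftrightarrow> \<omega> i = 1"

lemma ones_measurable: "ones \<in> PiM UNIV (\<lambda>_. borel) \<rightarrow>\<^sub>M bool_seqs"
proof -
  have "(\<lambda>\<omega>::int \<Rightarrow> real. \<omega> i = 1) \<in> PiM UNIV (\<lambda>_. borel) \<rightarrow>\<^sub>M count_space UNIV" for i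
    by measurable
  thus ?thesis unfolding bool_seqs_def ones_def by (intro measurable_PiM_single') (auto simp: space_PiM)
qed

lemma sets_borel_eq_1: "{r :: real. (r = 1) \<in> b} \<in> sets borel"
proof -
  have "(\<lambda>r :: real. r = 1) \<in> borel \<rightarrow>\<^sub>M count_space UNIV" by measurable
  from measurable_sets[OF this, of b] show ?thesis by (simp add: vimage_def)
qed

context window_frequencies
begin

definition corr_measure :: "(int \<Rightarrow> bool) measure" where
  "corr_measure = distr P.lim bool_seqs ones"

lemma sets_corr_measure [simp]: "sets corr_measure = sets bool_seqs"
  unfolding corr_measure_def by simp

lemma space_corr_measure [simp]: "space corr_measure = UNIV"
  unfolding corr_measure_def by simp

lemma measurable_corr_measure: "f \<in> corr_measure \<rightarrow>\<^sub>M corr_measure \<longleftrightarrow> f \<in> bool_seqs \<rightarrow>\<^sub>M bool_seqs"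
  by (simp only: measurable_cong_sets[OF sets_corr_measure sets_corr_measure])

lemma prob_space_corr_measure: "prob_space corr_measure"
proof -
  have "ones \<in> P.lim \<rightarrow>\<^sub>M bool_seqs"
    using ones_measurable by (subst measurable_cong_sets[OF P.sets_lim refl])
  thus ?thesis unfolding corr_measure_def by (rule P.P.prob_space_distr)
qed

lemma emeasure_corr_measure_cylinder:
  assumes K: "finite K"
  shows "emeasure corr_measure (prod_emb UNIV (\<lambda>_. count_space UNIV) K (PiE K B))
       = ennreal (\<Sum>x\<in>patterns K \<inter> PiE K (\<lambda>j. {r. (r = 1) \<in> B j}). limit_freq K x)"
proof -
  let ?R = "prod_emb UNIV (\<lambda>_. count_space UNIV) K (PiE K B)"
  let ?X = "PiE K (\<lambda>j. {r :: real. (r = 1) \<in> B j})"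
  have R: "?R \<in> sets bool_seqs" unfolding bool_seqs_def by (intro sets_PiM_I K) auto
  have X: "?X \<in> sets (PiM K (\<lambda>_. borel))" by (intro sets_PiM_I_finite K sets_borel_eq_1)
  have "ones -` ?R \<inter> space P.lim = prod_emb UNIV (\<lambda>_. borel) K ?X"
    by (auto simp: prod_emb_def ones_def space_PiM PiE_iff)
  moreover have "ones \<in> P.lim \<rightarrow>\<^sub>M bool_seqs"
    using ones_measurable by (subst measurable_cong_sets[OF P.sets_lim refl])
  ultimately have "emeasure corr_measure ?R = emeasure P.lim (prod_emb UNIV (\<lambda>_. borel) K ?X)"
    unfolding corr_measure_def using R by (simp add: emeasure_distr)
  also have "\<dots> = emeasure (marginal K) ?X" using K X by (intro P.emeasure_lim_emb) auto
  finally show ?thesis using emeasure_marginal[OF K X] by simp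
qed

lemma sum_limit_freq_translate:
  assumes K: "finite K"
  shows "(\<Sum>y\<in>patterns ((\<lambda>i. i + 1) ` K) \<inter> PiE ((\<lambda>i. i + 1) ` K) (\<lambda>j. C (j - 1)).
            limit_freq ((\<lambda>i. i + 1) ` K) y)
       = (\<Sum>x\<in>patterns K \<inter> PiE K C. limit_freq K x)"
proof -
  define sK where "sK = (\<lambda>i::int. i + 1) ` K"
  have mem_sK: "j \<in> sK \<longleftrightarrow> j - 1 \<in> K" for j unfolding sK_def by (force simp: image_iff)
  define untranslate where "untranslate y = restrict (\<lambda>i. y (i + 1)) K" for y :: "int \<Rightarrow> real"
  show ?thesis unfolding sK_def[symmetric]
  proof (rule sum.reindex_bij_witness[where i = "translate_pattern K" and j = untranslate])
    fix a assume a: "a \<in> patterns sK \<inter> PiE sK (\<lambda>j. C (j - 1))"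
    show trans: "translate_pattern K (untranslate a) = a"
      using a mem_sK by (auto simp: translate_pattern_def untranslate_def sK_def[symmetric] fun_eq_iff
          PiE_def extensional_def)
    have "a (i + 1) \<in> C i \<and> a (i + 1) \<in> {0, 1}" if "i \<in> K" for i
      using a mem_sK[of "i + 1"] that by (auto simp: patterns_def PiE_def Pi_def)
    thus "untranslate a \<in> patterns K \<inter> PiE K C"
      by (auto simp: untranslate_def patterns_def PiE_def Pi_def)
    hence "untranslate a \<in> patterns K" by blast
    thus "limit_freq K (untranslate a) = limit_freq sK a"
      using limit_freq_translate_pattern[OF K] trans unfolding sK_def by metis
  next
    fix b assume b: "b \<in> patterns K \<inter> PiE K C"
    show "untranslate (translate_pattern K b) = b"
      using b mem_sK by (auto simp: translate_pattern_def untranslate_def sK_def[symmetric] fun_eq_iff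
          PiE_def extensional_def)
    show "translate_pattern K b \<in> patterns sK \<inter> PiE sK (\<lambda>j. C (j - 1))"
      using b mem_sK by (auto simp: translate_pattern_def sK_def[symmetric] patterns_def PiE_def Pi_def)
  qed
qed

text \<open>Shift invariance only needs checking on cylinders, where it is the translation invariance
  of the limit frequencies.\<close>
lemma distr_shift_corr_measure: "distr corr_measure bool_seqs shift = corr_measure"
proof (rule measure_eqI_PiM_infinite[where I = UNIV and M = "\<lambda>_. count_space UNIV"])
  show "sets (distr corr_measure bool_seqs shift) = sets (PiM UNIV (\<lambda>_. count_space UNIV))"
    "sets corr_measure = sets (PiM UNIV (\<lambda>_. count_space (UNIV :: bool set)))"
    by (simp_all add: bool_seqs_def)
  have shift: "shift \<in> corr_measure \<rightarrow>\<^sub>M bool_seqs"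
    by (subst measurable_cong_sets[OF sets_corr_measure refl]) (rule shift_measurable)
  show "finite_measure (distr corr_measure bool_seqs shift)"
    using prob_space.prob_space_distr[OF prob_space_corr_measure shift] prob_space.finite_measure by blast
  fix B :: "int \<Rightarrow> bool set" and K :: "int set" assume K: "finite K" "K \<subseteq> UNIV"
  let ?R = "prod_emb UNIV (\<lambda>_. count_space UNIV) K (PiE K B)"
  let ?sK = "(\<lambda>i::int. i + 1) ` K"
  have R: "?R \<in> sets bool_seqs" unfolding bool_seqs_def by (intro sets_PiM_I K) auto
  have "shift -` ?R \<inter> space corr_measure
        = prod_emb UNIV (\<lambda>_. count_space UNIV) ?sK (PiE ?sK (\<lambda>j. B (j - 1)))"
    by (auto simp: prod_emb_def shift_def space_PiM PiE_iff)
  hence "emeasure (distr corr_measure bool_seqs shift) ?R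
         = ennreal (\<Sum>y\<in>patterns ?sK \<inter> PiE ?sK (\<lambda>j. {r. (r = 1) \<in> B (j - 1)}). limit_freq ?sK y)"
    using K by (simp add: emeasure_distr[OF shift R] emeasure_corr_measure_cylinder)
  also have "\<dots> = emeasure corr_measure ?R"
    using sum_limit_freq_translate[OF K(1), of "\<lambda>j. {r. (r = 1) \<in> B j}"]
    by (simp add: emeasure_corr_measure_cylinder[OF K(1)])
  finally show "emeasure (distr corr_measure bool_seqs shift) ?R = emeasure corr_measure ?R" .
qed

lemma inv_mps_corr_measure: "inv_mps corr_measure shift"
  unfolding inv_mps_def
proof (intro conjI ballI)
  show "prob_space corr_measure" by (rule prob_space_corr_measure)
  show "shift \<in> corr_measure \<rightarrow>\<^sub>M corr_measure"
    unfolding measurable_corr_measure by (rule shift_measurable)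
  show "bij_betw shift (space corr_measure) (space corr_measure)" using bij_shift by simp
  show "inv_into (space corr_measure) shift \<in> corr_measure \<rightarrow>\<^sub>M corr_measure"
    unfolding space_corr_measure inv_into_shift measurable_corr_measure by (rule inv_shift_measurable)
  fix A assume "A \<in> sets corr_measure"
  hence "emeasure corr_measure (shift -` A \<inter> space corr_measure)
         = emeasure (distr corr_measure bool_seqs shift) A"
    by (subst emeasure_distr) (auto simp: measurable_cong_sets[OF sets_corr_measure refl] shift_measurable)
  thus "emeasure corr_measure (shift -` A \<inter> space corr_measure) = emeasure corr_measure A"
    by (simp only: distr_shift_corr_measure)
qed

lemma measure_corr_measure_all:
  assumes J: "finite J"
  shows "measure corr_measure {x. \<forall>i\<in>J. x i} = limit_freq J (restrict (\<lambda>_. 1) J)"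
proof -
  have "{x. \<forall>i\<in>J. x i} = prod_emb UNIV (\<lambda>_. count_space UNIV) J (PiE J (\<lambda>_. {True}))"
    by (auto simp: prod_emb_def space_PiM PiE_iff fun_eq_iff restrict_def)
  moreover have "patterns J \<inter> PiE J (\<lambda>j. {r. (r = 1) \<in> {True}}) = {restrict (\<lambda>_. 1) J}"
    unfolding patterns_def by (auto simp: PiE_iff fun_eq_iff restrict_def extensional_def)
  ultimately have "emeasure corr_measure {x. \<forall>i\<in>J. x i} = ennreal (limit_freq J (restrict (\<lambda>_. 1) J))"
    by (simp only: emeasure_corr_measure_cylinder[OF J]) simp
  moreover have "0 \<le> limit_freq J (restrict (\<lambda>_. 1) J)"
    by (rule limit_freq_nonneg[OF J]) (auto simp: patterns_def)
  ultimately show ?thesis by (simp add: measure_def)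
qed

end

lemma furstenberg_correspondence:
  assumes "dense_windows E"
  obtains M :: "(int \<Rightarrow> bool) measure" and T D where "inv_mps M T" "D \<in> sets M" "measure M D > 0"
    "\<forall>k. measure M (D \<inter> itrans M T k D) > 0 \<longrightarrow> (\<exists>u\<in>E. \<exists>v\<in>E. k = u - v)"
proof -
  obtain e where e: "e > 0" and "\<forall>N. \<exists>N'\<ge>N. \<exists>M. e * real N' \<le> real (window_count E M N')"
    using assms unfolding dense_windows_def frequently_sequentially by blast
  hence "\<forall>k. \<exists>N M. Suc k \<le> N \<and> e * real N \<le> real (window_count E M N)" by blast
  then obtain len start where len: "\<And>k. Suc k \<le> len k"
    and dense: "\<And>k. e * real (len k) \<le> real (window_count E (start k) (len k))"
    by metis
  interpret window_frequencies E start len by unfold_locales (use len Suc_le_eq in blast)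
  let ?D = "{x :: int \<Rightarrow> bool. \<forall>i\<in>{0}. x i}"
  show ?thesis
  proof (rule that[of corr_measure shift ?D])
    show "inv_mps corr_measure shift" by (rule inv_mps_corr_measure)
    show "?D \<in> sets corr_measure" using sets_bool_seqs_all[of "{0}"] by simp
    have "e \<le> limit_freq {0} (restrict (\<lambda>_. 1) {0})"
      using dense by (intro limit_freq_singleton_ge) (simp add: window_count_def window_def Int_commute)
    thus "measure corr_measure ?D > 0" using e measure_corr_measure_all[of "{0}"] by simp
  next
    show "\<forall>k. measure corr_measure (?D \<inter> itrans corr_measure shift k ?D) > 0 \<longrightarrow>
            (\<exists>u\<in>E. \<exists>v\<in>E. k = u - v)"
    proof (intro allI impI)
      fix k assume "measure corr_measure (?D \<inter> itrans corr_measure shift k ?D) > 0"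
      moreover have "?D \<inter> itrans corr_measure shift k ?D = {x. \<forall>i\<in>{0, -k}. x i}"
        unfolding itrans_def by (auto simp: ipow_shift)
      ultimately have "limit_freq {0, -k} (restrict (\<lambda>_. 1) {0, -k}) > 0"
        using measure_corr_measure_all[of "{0, -k}"] by simp
      then obtain t where t: "pattern {0, -k} t = restrict (\<lambda>_. 1) {0, -k}"
        by (rule limit_freq_pos_imp_occurs) (auto simp: patterns_def)
      have "t \<in> E" "t - k \<in> E"
        using fun_cong[OF t, of 0] fun_cong[OF t, of "-k"] by (auto simp: pattern_def indicator_def split: if_splits)
      thus "\<exists>u\<in>E. \<exists>v\<in>E. k = u - v" by force
    qed
  qed
qed

theorem lemma8p2:
  fixes S A :: "int set" and n :: int
  assumes "\<forall>m::int. recurrence_set TYPE(int \<Rightarrow> bool) ((\<lambda>s. s + m) ` S)"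
    and "upper_banach_density A > 0"
  shows "infinite (S \<inter> {n + a - b | a b. a \<in> A \<and> b \<in> A})"
proof
  let ?F = "S \<inter> {n + a - b | a b. a \<in> A \<and> b \<in> A}"
  assume "finite ?F"
  hence fin: "finite ((\<lambda>s. s - n) ` ?F)" by simp
  obtain e where e: "e > 0" "\<And>N. N > 0 \<Longrightarrow> \<exists>M. e * real N \<le> real (window_count A M N)"
    using upper_banach_density_pos_imp_uniformly_dense[OF assms(2)] by blast
  obtain E c where E: "E \<subseteq> {u \<in> A. u + c \<in> A}" "dense_windows E"
    and avoid: "\<forall>u\<in>E. \<forall>v\<in>E. \<forall>g\<in>(\<lambda>s. s - n) ` ?F. u - v \<noteq> g + c"
    using e fin by (rule dense_set_avoiding_differences)
  obtain M :: "(int \<Rightarrow> bool) measure" and T D where sys: "inv_mps M T" "D \<in> sets M" "measure M D > 0"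
    and returns: "\<forall>k. measure M (D \<inter> itrans M T k D) > 0 \<longrightarrow> (\<exists>u\<in>E. \<exists>v\<in>E. k = u - v)"
    using E(2) by (rule furstenberg_correspondence)
  have "recurrence_set TYPE(int \<Rightarrow> bool) ((\<lambda>s. s + (c - n)) ` S)" using assms(1) by blast
  then obtain s where s: "s \<in> S" "measure M (D \<inter> itrans M T (s + (c - n)) D) > 0"
    using sys unfolding recurrence_set_def by blast
  then obtain u v where uv: "u \<in> E" "v \<in> E" "s + (c - n) = u - v" using returns by blast
  have "s = n + u - (v + c)" "u \<in> A" "v + c \<in> A" using uv E(1) by auto
  hence "s - n \<in> (\<lambda>s. s - n) ` ?F" using s(1) by blast
  thus False using avoid uv by force
qed

end
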